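(* Let $N\ge 1$ and $d$ be integers and let $0\le m_1<m_2<\dots<m_N<d$ be integers. Then the $(N+1)$-dimensional subspace $$V=\mathrm{Span}\{P_{m_1;d}(x),\dots,P_{m_N;d}(x),P_{d;d}(x)\}\subset \mathrm{Poly}_d$$ is the unique element of the Schubert intersection $$\Omega_{\mathbf a}(0)\cap\Omega_{(d-N)}(-1)\cap\Omega_{\mathbf w}(\infty)\subset Gr_{N+1}(\mathrm{Poly}_d),$$ where $\mathbf a=(m_N+1-N,\dots,m_2-1,m_1)$ (i.e. $a_l=m_{N+1-l}-(N-l)$, $1\le l\le N$) and $\mathbf w=(d-m_1-N,\dots,d-m_{N-1}-2,d-m_N-1)$ (i.e. $w_l=d-m_l-(N+1-l)$, $1\le l\le N$), and $(d-N)$ denotes the special partition $(d-N,0,\dots,0)$.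
   Context: For integers $1\le m\le d$ (and also $m=0$), the truncated binomial is $P_{m;d}(x)=\sum_{j=0}^{m}\binom{d}{j}x^j$; in particular $P_{d;d}(x)=(x+1)^d$. $\mathrm{Poly}_d$ is the complex vector space of polynomials in $x$ of degree at most $d$, and $Gr_{N+1}(\mathrm{Poly}_d)$ is the Grassmannian of $(N+1)$-dimensional subspaces (of dimension $(N+1)(d-N)$). For $\xi\in\mathbb C$, the osculating flag $\mathcal F_\bullet(\xi)$ has $\mathcal F_j(\xi)=\{f\in\mathrm{Poly}_d:(x-\xi)^{d-j}\mid f\}$, $0\le j\le d$; for $\xi=\infty$, $\mathcal F_j(\infty)=\mathrm{Poly}_j$. A partition is $\mathbf w=(w_1,\dots,w_N)$ with $d-N\ge w_1\ge\dots\ge w_N\ge 0$; set $w_{N+1}=0$. The Schubert cell $\Omega^\circ_{\mathbf w}(\xi)$ is the set of $V\in Gr_{N+1}(\mathrm{Poly}_d)$ with $\dim(V\cap\mathcal F_{d-N-1+i-w_i}(\xi))=i$ and $\dim(V\cap\mathcal F_{d-N-2+i-w_i}(\xi))=i-1$ for $i=1,\dots,N+1$; the Schubert variety $\Omega_{\mathbf w}(\xi)$ is its closure. (Equivalently, the orders at $\xi$ of the nonzero polynomials of $V$ — order at $\infty$ of $f$ being $d-\deg f$ — include the values $w_{N+2-i}+i-1$... i.e. the cell prescribes the $N+1$ distinct orders $w_l+N+1-l$, $1\le l\le N+1$.) *)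

theory Defs
  imports "HOL-Computational_Algebra.Polynomial"
begin

type_synonym cpoly = "complex poly"

definition Poly_le :: "nat \<Rightarrow> cpoly set" where
  "Poly_le d = {f. degree f \<le> d}"

definition psubspace :: "cpoly set \<Rightarrow> bool" where
  "psubspace V = module.subspace (smult :: complex \<Rightarrow> cpoly \<Rightarrow> cpoly) V"

definition pspan :: "cpoly set \<Rightarrow> cpoly set" where
  "pspan S = module.span (smult :: complex \<Rightarrow> cpoly \<Rightarrow> cpoly) S"

definition pdim :: "cpoly set \<Rightarrow> nat" where
  "pdim V = vector_space.dim (smult :: complex \<Rightarrow> cpoly \<Rightarrow> cpoly) V"

definition in_Gr :: "nat \<Rightarrow> nat \<Rightarrow> cpoly set \<Rightarrow> bool" where
  "in_Gr k d V \<longleftrightarrow> psubspace V \<and> V \<subseteq> Poly_le d \<and> pdim V = k"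

definition Ptrunc :: "nat \<Rightarrow> nat \<Rightarrow> cpoly" where
  "Ptrunc m d = (\<Sum>j\<le>m. monom (of_nat (d choose j)) j)"

definition osc_flag :: "nat \<Rightarrow> complex \<Rightarrow> nat \<Rightarrow> cpoly set" where
  "osc_flag d \<xi> j = {f \<in> Poly_le d. [:-\<xi>, 1:] ^ (d - j) dvd f}"

definition inf_flag :: "nat \<Rightarrow> nat \<Rightarrow> cpoly set" where
  "inf_flag d j = Poly_le j"

text \<open>A partition w = (w_1,...,w_N) is a function on indices 1..N; the convention
  w_{N+1} = 0 is built into the Schubert conditions.\<close>
definition is_partition :: "nat \<Rightarrow> nat \<Rightarrow> (nat \<Rightarrow> nat) \<Rightarrow> bool" where
  "is_partition N d w \<longleftrightarrow> (\<forall>i\<in>{1..N}. w i \<le> d - N) \<and>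
     (\<forall>i j. 1 \<le> i \<and> i \<le> j \<and> j \<le> N \<longrightarrow> w j \<le> w i)"

definition ext_part :: "nat \<Rightarrow> (nat \<Rightarrow> nat) \<Rightarrow> nat \<Rightarrow> nat" where
  "ext_part N w i = (if i = N + 1 then 0 else w i)"

text \<open>Schubert variety Omega_w(F) in Gr_{N+1}(Poly_d) for a flag F: the closure of the
  Schubert cell, i.e. dim(V \<inter> F_{d-N-1+i-w_i}) \<ge> i for i = 1..N+1.\<close>
definition schubert_var ::
  "nat \<Rightarrow> nat \<Rightarrow> (nat \<Rightarrow> nat) \<Rightarrow> (nat \<Rightarrow> cpoly set) \<Rightarrow> cpoly set \<Rightarrow> bool" where
  "schubert_var N d w F V \<longleftrightarrow> in_Gr (N + 1) d V \<and>
     (\<forall>i\<in>{1..N+1}. pdim (V \<inter> F ((d + i) - (N + 1 + ext_part N w i))) \<ge> i)"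

definition special_part :: "nat \<Rightarrow> nat \<Rightarrow> nat" where
  "special_part k l = (if l = 1 then k else 0)"

end

theory Submission
  imports Defs
begin

(* The polynomials P_{m_1;d}, ..., P_{m_N;d}, P_{d;d} = (x+1)^d have distinct degrees, so
   they span an (N+1)-dimensional V. At infinity, P_{m_1;d}, ..., P_{m_k;d} have degree at
   most m_k; at 0, the differences P_{m_j;d} - P_{m_k;d} (j > k) vanish to order m_k + 1.
   At -1 only the first condition, (x+1)^d in V, is a restriction: the others hold in the
   whole Grassmannian by a dimension count.
   Conversely, if V lies in the intersection, then its subspaces of polynomials of degree at
   most m_k and of multiples of x^{m_k+1} meet in 0 and have complementary dimensions, so
   they split V. Splitting (x+1)^d in V accordingly shows that its truncation P_{m_k;d} lies
   in V, so V contains the span of the P_{m_k;d} and, having the same dimension, equals it. *)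

interpretation poly_vs: vector_space "smult :: 'a::field \<Rightarrow> 'a poly \<Rightarrow> 'a poly"
  by unfold_locales (auto simp: smult_add_right smult_add_left)

context vector_space
begin

lemma independent_Un:
  assumes "independent X" "independent Y" "span X \<inter> span Y \<subseteq> {0}"
  shows "independent (X \<union> Y)"
  unfolding independent_explicit_finite_subsets
proof (intro allI impI ballI)
  fix S u v
  assume S: "S \<subseteq> X \<union> Y" "finite S" and sum_0: "(\<Sum>v\<in>S. u v *s v) = 0" and "v \<in> S"
  let ?x = "\<Sum>v\<in>S \<inter> X. u v *s v" and ?y = "\<Sum>v\<in>S - X. u v *s v"
  have "?x + ?y = 0"
    using sum_0 sum.Int_Diff[OF S(2), of "\<lambda>v. u v *s v" X] by simp
  then have x_eq: "?x = - ?y"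
    by (simp add: eq_neg_iff_add_eq_0)
  have "?x \<in> span X" "?y \<in> span Y"
    using S(1) by (auto intro!: span_sum span_scale intro: span_base)
  then have "?x = 0"
    using assms(3) x_eq span_neg[of ?y Y] by auto
  moreover from this have "?y = 0"
    using x_eq by simp
  moreover have "S \<inter> X \<subseteq> X" "S - X \<subseteq> Y" "finite (S \<inter> X)" "finite (S - X)"
    using S by auto
  ultimately show "u v = 0"
    using assms(1,2) \<open>v \<in> S\<close> unfolding independent_explicit_finite_subsets by blast
qed

lemma card_le_dim_if_independent:
  assumes "independent B" "B \<subseteq> S" "S \<subseteq> span W" "finite W"
  shows "card B \<le> dim S"
proof -
  obtain A where A: "B \<subseteq> A" "A \<subseteq> S" "independent A" "S \<subseteq> span A"
    using maximal_independent_subset_extend[OF assms(2,1)] by blast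
  have "finite A"
    using independent_span_bound[OF assms(4) A(3)] A(2) assms(3) by blast
  then have "card B \<le> card A"
    using A(1) by (rule card_mono)
  also have "card A = dim S"
    using A(2,4,3) by (rule basis_card_eq_dim)
  finally show ?thesis .
qed

lemma subset_span_if_dim_le_card:
  assumes "independent B" "B \<subseteq> S" "S \<subseteq> span W" "finite W" "dim S \<le> card B"
  shows "S \<subseteq> span B"
proof
  fix s assume "s \<in> S"
  show "s \<in> span B"
  proof (rule ccontr)
    assume "s \<notin> span B"
    then have "independent (insert s B)" "s \<notin> B"
      using independent_insertI assms(1) span_base by blast+
    moreover have "finite B"
      using independent_span_bound[OF assms(4,1)] assms(2,3) by blast
    ultimately have "Suc (card B) \<le> dim S"
      using card_le_dim_if_independent[of "insert s B" S W] assms(2-4) \<open>s \<in> S\<close> by simp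
    then show False
      using assms(5) by simp
  qed
qed

lemma ex_nonzero_if_dim_pos:
  assumes "0 < dim S"
  obtains x where "x \<in> S" "x \<noteq> 0"
proof (rule ccontr)
  assume "\<not> thesis"
  with that have "S \<subseteq> span {}"
    by (auto simp: span_empty)
  then have "dim S \<le> card ({} :: 'b set)"
    using dim_le_card by blast
  with assms show False
    by simp
qed

lemma dim_add_dim_le_dim_Int:
  assumes "subspace V" "subspace F" "V \<subseteq> span W" "F \<subseteq> span W" "finite W"
  shows "dim V + dim F \<le> dim (V \<inter> F) + card W"
proof -
  (* Extend a basis B of F by vectors A of V to a basis E of span (F \<union> V); then V is spanned
     by A together with V \<inter> F, while card A + card B = card E \<le> card W. *)
  obtain B where B: "B \<subseteq> F" "independent B" "F \<subseteq> span B" "card B = dim F"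
    using basis_exists by blast
  obtain E where E: "B \<subseteq> E" "E \<subseteq> B \<union> V" "independent E" "B \<union> V \<subseteq> span E"
    using maximal_independent_subset_extend[of B "B \<union> V"] B(2) by blast
  obtain C where C: "C \<subseteq> V \<inter> F" "independent C" "V \<inter> F \<subseteq> span C" "card C = dim (V \<inter> F)"
    using basis_exists by blast
  define A where "A = E - B"
  have "E \<subseteq> span W"
    using E(2) B(1) assms(3,4) by blast
  then have E_bound: "finite E" "card E \<le> card W"
    using independent_span_bound[OF assms(5) E(3)] by auto
  have "finite C"
    using independent_span_bound[OF assms(5) C(2)] C(1) assms(3) by blast
  have "A \<subseteq> V"
    using E(2) by (auto simp: A_def)
  have "V \<subseteq> span (A \<union> C)"
  proof
    fix v assume "v \<in> V"
    moreover have "A \<union> B = E"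
      using E(1) by (auto simp: A_def)
    ultimately have "v \<in> span (A \<union> B)"
      using E(4) by blast
    then obtain a b where ab: "v = a + b" "a \<in> span A" "b \<in> span B"
      by (auto simp: span_Un)
    have "a \<in> V"
      using ab(2) span_minimal[OF \<open>A \<subseteq> V\<close> assms(1)] by blast
    then have "b \<in> V \<inter> F"
      using ab(1,3) \<open>v \<in> V\<close> span_minimal[OF B(1) assms(2)] subspace_diff[OF assms(1)]
      by (metis IntI add_diff_cancel_left' subsetD)
    then have "b \<in> span C"
      using C(3) by blast
    then show "v \<in> span (A \<union> C)"
      using ab(1,2) span_mono[of A "A \<union> C"] span_mono[of C "A \<union> C"] span_add by blast
  qed
  then have "dim V \<le> card (A \<union> C)"
    using \<open>finite C\<close> E_bound(1) by (intro dim_le_card) (auto simp: A_def)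
  also have "\<dots> \<le> card A + card C"
    by (rule card_Un_le)
  also have "card A + card B = card E"
    using E(1) E_bound(1) card_Diff_subset[of B E] card_mono[of E B] by (simp add: A_def finite_subset)
  ultimately show ?thesis
    using B(4) C(4) E_bound(2) by linarith
qed

lemma subset_sums_if_dim_le:
  assumes "subspace U" "subspace Z" "U \<subseteq> V" "Z \<subseteq> V" "V \<subseteq> span W" "finite W"
    and "U \<inter> Z \<subseteq> {0}" "dim V \<le> dim U + dim Z"
  shows "V \<subseteq> {u + z |u z. u \<in> U \<and> z \<in> Z}"
proof -
  obtain A where A: "A \<subseteq> U" "independent A" "U \<subseteq> span A" "card A = dim U"
    using basis_exists by blast
  obtain B where B: "B \<subseteq> Z" "independent B" "Z \<subseteq> span B" "card B = dim Z"
    using basis_exists by blast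
  have spans: "span A \<subseteq> U" "span B \<subseteq> Z"
    using span_minimal A(1) B(1) assms(1,2) by blast+
  have indep: "independent (A \<union> B)"
    using independent_Un[OF A(2) B(2)] spans assms(7) by blast
  have "A \<union> B \<subseteq> V"
    using A(1) B(1) assms(3,4) by blast
  then have "finite (A \<union> B)"
    using independent_span_bound[OF assms(6) indep] assms(5) by blast
  moreover have "A \<inter> B = {}"
    using A(1,2) B(1) assms(7) dependent_zero by blast
  ultimately have "card (A \<union> B) = dim U + dim Z"
    using A(4) B(4) by (simp add: card_Un_disjoint)
  then have "V \<subseteq> span (A \<union> B)"
    using subset_span_if_dim_le_card[OF indep \<open>A \<union> B \<subseteq> V\<close> assms(5,6)] assms(8) by simp
  then show ?thesis
    unfolding span_Un using spans by blast
qed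

end

lemma independent_if_inj_on_degree:
  fixes S :: "'a::field poly set"
  assumes "finite S" "0 \<notin> S" "inj_on degree S"
  shows "poly_vs.independent S"
  using assms
proof (induction S rule: finite_ranking_induct[where f = degree])
  case empty
  show ?case
    by (rule poly_vs.independent_empty)
next
  case (insert p S)
  then have IH: "poly_vs.independent S"
    by (simp add: inj_on_insert)
  show ?case
  proof (cases "p \<in> S")
    case True
    then show ?thesis
      using IH by (simp add: insert_absorb)
  next
    case False
    have "degree q < degree p" if "q \<in> S" for q
      using insert.hyps(2)[OF that] insert.prems(2) False that by (auto simp: inj_on_def)
    then have "S \<subseteq> {q. coeff q (degree p) = 0}"
      by (auto intro: coeff_eq_0)
    moreover have "poly_vs.subspace {q. coeff q (degree p) = 0}"
      by (simp add: poly_vs.subspace_def)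
    ultimately have "poly_vs.span S \<subseteq> {q. coeff q (degree p) = 0}"
      by (rule poly_vs.span_minimal)
    moreover have "coeff p (degree p) \<noteq> 0"
      using insert.prems(1) by auto
    ultimately have "p \<notin> poly_vs.span S"
      by blast
    then show ?thesis
      using IH by (rule poly_vs.independent_insertI)
  qed
qed

lemma independent_image_if_inj_on_degree:
  fixes f :: "'b \<Rightarrow> 'a::field poly"
  assumes "finite J" "inj_on (\<lambda>j. degree (f j)) J" "\<And>j. j \<in> J \<Longrightarrow> f j \<noteq> 0"
  shows "poly_vs.independent (f ` J)" "card (f ` J) = card J"
proof -
  show "poly_vs.independent (f ` J)"
    using assms inj_on_imageI[of degree f J] by (intro independent_if_inj_on_degree) (auto simp: comp_def)
  have "inj_on f J"
    using assms(2) by (auto simp: inj_on_def)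
  then show "card (f ` J) = card J"
    by (rule card_image)
qed

lemma Poly_le_subspace: "poly_vs.subspace (Poly_le d)"
  unfolding poly_vs.subspace_def Poly_le_def
  by (auto intro: order_trans[OF degree_add_le] order_trans[OF degree_smult_le])

lemma osc_flag_subspace: "poly_vs.subspace (osc_flag d \<xi> j)"
  unfolding poly_vs.subspace_def osc_flag_def Poly_le_def
  by (auto intro: order_trans[OF degree_add_le] order_trans[OF degree_smult_le] dvd_add dvd_smult)

lemma Poly_le_finite_span:
  obtains W where "finite W" "card W = d + 1" "Poly_le d \<subseteq> poly_vs.span W"
proof (rule that)
  let ?W = "(\<lambda>j. monom 1 j) ` {..d} :: cpoly set"
  show "finite ?W"
    by simp
  show "card ?W = d + 1"
    by (subst card_image) (auto simp: inj_on_def monom_eq_iff')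
  show "Poly_le d \<subseteq> poly_vs.span ?W"
  proof
    fix p :: cpoly
    assume "p \<in> Poly_le d"
    then have "p = (\<Sum>i\<le>d. smult (coeff p i) (monom 1 i))"
      by (simp add: Poly_le_def smult_monom poly_as_sum_of_monoms')
    also have "\<dots> \<in> poly_vs.span ?W"
      by (intro poly_vs.span_sum poly_vs.span_scale poly_vs.span_base) simp
    finally show "p \<in> poly_vs.span ?W" .
  qed
qed

lemma card_le_dim_if_inj_on_degree:
  fixes f :: "'b \<Rightarrow> cpoly"
  assumes "finite J" "inj_on (\<lambda>j. degree (f j)) J" "\<And>j. j \<in> J \<Longrightarrow> f j \<noteq> 0"
    and "f ` J \<subseteq> S" "S \<subseteq> Poly_le d"
  shows "card J \<le> poly_vs.dim S"
proof -
  obtain W where W: "finite W" "Poly_le d \<subseteq> poly_vs.span W"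
    using Poly_le_finite_span by metis
  show ?thesis
    using poly_vs.card_le_dim_if_independent[OF _ assms(4) _ W(1)] assms(5) W(2)
      independent_image_if_inj_on_degree[OF assms(1-3)] by auto
qed

lemma coeff_Ptrunc: "coeff (Ptrunc m d) j = (if j \<le> m then of_nat (d choose j) else 0)"
  unfolding Ptrunc_def by (simp add: coeff_sum coeff_monom)

lemma coeff_one_plus_X_power: "coeff ([:1, 1:] ^ d) j = (of_nat (d choose j) :: 'a::comm_semiring_1)"
  by (cases "j \<le> d") (simp_all add: coeff_linear_poly_power coeff_eq_0 degree_linear_power binomial_eq_0)

lemma Ptrunc_self: "Ptrunc d d = [:1, 1:] ^ d"
  by (rule poly_eqI) (simp add: coeff_Ptrunc coeff_one_plus_X_power binomial_eq_0)

lemma Ptrunc_nonzero: "Ptrunc m d \<noteq> 0"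
proof -
  have "coeff (Ptrunc m d) 0 = 1"
    by (simp add: coeff_Ptrunc)
  then show ?thesis
    by auto
qed

lemma degree_Ptrunc:
  assumes "m \<le> d"
  shows "degree (Ptrunc m d) = m"
proof (rule antisym)
  show "degree (Ptrunc m d) \<le> m"
    by (intro degree_le) (simp add: coeff_Ptrunc)
  show "m \<le> degree (Ptrunc m d)"
    using assms by (intro le_degree) (simp add: coeff_Ptrunc)
qed

lemma degree_Ptrunc_diff:
  assumes "m < n" "n \<le> d"
  shows "degree (Ptrunc n d - Ptrunc m d) = n"
proof (rule antisym)
  show "degree (Ptrunc n d - Ptrunc m d) \<le> n"
    using assms by (intro degree_le) (simp add: coeff_Ptrunc)
  show "n \<le> degree (Ptrunc n d - Ptrunc m d)"
    using assms by (intro le_degree) (simp add: coeff_Ptrunc)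
qed

lemma osc_flag_top: "osc_flag d \<xi> d = Poly_le d"
  by (simp add: osc_flag_def Poly_le_def)

lemma inf_flag_top: "inf_flag d d = Poly_le d"
  by (simp add: inf_flag_def)

lemma mem_osc_flag_0_iff: "f \<in> osc_flag d 0 j \<longleftrightarrow> f \<in> Poly_le d \<and> (\<forall>t < d - j. coeff f t = 0)"
  by (simp add: osc_flag_def monom_1_dvd_iff' flip: monom_altdef[of 1, simplified])

lemma power_mem_if_dim_osc_flag_0_pos:
  assumes "poly_vs.subspace V" "0 < poly_vs.dim (V \<inter> osc_flag d \<xi> 0)"
  shows "[:-\<xi>, 1:] ^ d \<in> V"
proof -
  obtain f where f: "f \<in> V" "f \<in> osc_flag d \<xi> 0" "f \<noteq> 0"
    using poly_vs.ex_nonzero_if_dim_pos[OF assms(2)] by blast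
  then obtain q where q: "f = [:-\<xi>, 1:] ^ d * q" and "degree f \<le> d"
    by (auto simp: osc_flag_def Poly_le_def elim: dvdE)
  moreover have "q \<noteq> 0"
    using f(3) q by auto
  ultimately have "degree q = 0"
    by (simp add: degree_mult_eq degree_linear_power)
  then obtain c where "q = [:c:]"
    by (elim degree_eq_zeroE)
  then have "f = smult c ([:-\<xi>, 1:] ^ d)" "c \<noteq> 0"
    using q \<open>q \<noteq> 0\<close> by auto
  then have "[:-\<xi>, 1:] ^ d = smult (inverse c) f"
    by simp
  then show ?thesis
    using poly_vs.subspace_scale[OF assms(1) f(1)] by simp
qed

lemma dim_osc_flag_ge:
  assumes "j \<le> d"
  shows "j + 1 \<le> poly_vs.dim (osc_flag d \<xi> j)"
proof -
  define f where "f t = [:-\<xi>, 1:] ^ (d - j) * monom 1 t" for t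
  have degree_f: "degree (f t) = d - j + t" for t
    by (simp add: f_def degree_mult_eq degree_linear_power degree_monom_eq)
  have "card {..j} \<le> poly_vs.dim (osc_flag d \<xi> j)"
  proof (rule card_le_dim_if_inj_on_degree)
    show "inj_on (\<lambda>t. degree (f t)) {..j}"
      by (auto simp: inj_on_def degree_f)
    show "f ` {..j} \<subseteq> osc_flag d \<xi> j"
      using assms by (auto simp: osc_flag_def Poly_le_def degree_f) (simp add: f_def)
    show "osc_flag d \<xi> j \<subseteq> Poly_le d"
      by (auto simp: osc_flag_def)
  qed (simp_all add: f_def)
  then show ?thesis
    by simp
qed

lemma Ptrunc_eq_if_split:
  assumes "[:1, 1:] ^ d = u + z" "degree u \<le> n" "\<forall>t \<le> n. coeff z t = 0"
  shows "u = Ptrunc n d"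
proof (rule poly_eqI)
  fix t
  show "coeff u t = coeff (Ptrunc n d) t"
  proof (cases "t \<le> n")
    case True
    then show ?thesis
      using arg_cong[OF assms(1), of "\<lambda>p. coeff p t"] assms(3)
      by (simp add: coeff_one_plus_X_power coeff_Ptrunc)
  next
    case False
    then show ?thesis
      using assms(2) by (simp add: coeff_eq_0 coeff_Ptrunc)
  qed
qed

lemma Ptrunc_mem_if_dim_le:
  assumes "poly_vs.subspace V" "V \<subseteq> Poly_le d" "[:1, 1:] ^ d \<in> V" "n < d"
    and "poly_vs.dim V \<le> poly_vs.dim (V \<inter> Poly_le n) + poly_vs.dim (V \<inter> osc_flag d 0 (d - 1 - n))"
  shows "Ptrunc n d \<in> V"
proof -
  let ?U = "V \<inter> Poly_le n" and ?Z = "V \<inter> osc_flag d 0 (d - 1 - n)"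
  have low_zero: "\<forall>t \<le> n. coeff z t = 0" if "z \<in> ?Z" for z
    using that assms(4) by (auto simp: mem_osc_flag_0_iff)
  have "?U \<inter> ?Z \<subseteq> {0}"
  proof
    fix p assume p: "p \<in> ?U \<inter> ?Z"
    then have "coeff p t = 0" for t
      using low_zero[of p] by (cases "t \<le> n") (auto simp: Poly_le_def coeff_eq_0)
    then show "p \<in> {0}"
      by (simp add: poly_eqI)
  qed
  moreover obtain W where "finite W" "Poly_le d \<subseteq> poly_vs.span W"
    using Poly_le_finite_span by metis
  ultimately have "V \<subseteq> {u + z |u z. u \<in> ?U \<and> z \<in> ?Z}"
    using assms(1,2,5)
    by (intro poly_vs.subset_sums_if_dim_le)
      (auto intro: poly_vs.subspace_inter Poly_le_subspace osc_flag_subspace)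
  then obtain u z where uz: "[:1, 1:] ^ d = u + z" "u \<in> ?U" "z \<in> ?Z"
    using assms(3) by blast
  then have "u = Ptrunc n d"
    using low_zero by (intro Ptrunc_eq_if_split) (auto simp: Poly_le_def)
  then show ?thesis
    using uz(2) by blast
qed

lemma schubert_var_iff:
  assumes "F d = Poly_le d"
  shows "schubert_var N d w F V \<longleftrightarrow>
    in_Gr (N + 1) d V \<and> (\<forall>i\<in>{1..N}. i \<le> pdim (V \<inter> F (d + i - (N + 1 + w i))))"
proof -
  have "{1..N + 1} = insert (N + 1) {1..N}"
    by auto
  moreover have "V \<inter> F d = V" if "in_Gr (N + 1) d V"
    using that assms by (auto simp: in_Gr_def)
  ultimately show ?thesis
    by (auto simp: schubert_var_def ext_part_def in_Gr_def)
qed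

lemma dim_osc_flag_0_pos_iff:
  assumes "poly_vs.subspace V" "V \<subseteq> Poly_le d"
  shows "0 < poly_vs.dim (V \<inter> osc_flag d \<xi> 0) \<longleftrightarrow> [:-\<xi>, 1:] ^ d \<in> V"
proof
  assume "[:-\<xi>, 1:] ^ d \<in> V"
  moreover have "[:-\<xi>, 1:] ^ d \<in> osc_flag d \<xi> 0"
    by (simp add: osc_flag_def Poly_le_def degree_linear_power)
  ultimately have "card {0::nat} \<le> poly_vs.dim (V \<inter> osc_flag d \<xi> 0)"
    by (intro card_le_dim_if_inj_on_degree[where f = "\<lambda>_. [:-\<xi>, 1:] ^ d" and d = d])
      (auto simp: osc_flag_def)
  then show "0 < poly_vs.dim (V \<inter> osc_flag d \<xi> 0)"
    by simp
qed (rule power_mem_if_dim_osc_flag_0_pos[OF assms(1)])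

lemma dim_Int_osc_flag_ge:
  assumes "in_Gr k d V" "i \<le> k"
  shows "i \<le> poly_vs.dim (V \<inter> osc_flag d \<xi> (d + i - k))"
proof -
  obtain W where W: "finite W" "card W = d + 1" "Poly_le d \<subseteq> poly_vs.span W"
    using Poly_le_finite_span by metis
  have "poly_vs.dim V + poly_vs.dim (osc_flag d \<xi> (d + i - k))
      \<le> poly_vs.dim (V \<inter> osc_flag d \<xi> (d + i - k)) + card W"
    using assms(1) W by (intro poly_vs.dim_add_dim_le_dim_Int osc_flag_subspace)
      (auto simp: in_Gr_def psubspace_def osc_flag_def)
  moreover have "d + i - k + 1 \<le> poly_vs.dim (osc_flag d \<xi> (d + i - k))"
    using assms(2) by (intro dim_osc_flag_ge) simp
  ultimately show ?thesis
    using assms(1) W(2) by (simp add: in_Gr_def pdim_def)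
qed

locale truncation_degrees =
  fixes N d :: nat and m :: "nat \<Rightarrow> nat"
  assumes N_pos: "N \<ge> 1"
    and m_less: "\<And>i j. 1 \<le> i \<Longrightarrow> i < j \<Longrightarrow> j \<le> N \<Longrightarrow> m i < m j"
    and m_N_less: "m N < d"
begin

definition m_ext :: "nat \<Rightarrow> nat" where
  "m_ext i = (if i = N + 1 then d else m i)"

definition Pm :: "nat \<Rightarrow> cpoly" where
  "Pm i = Ptrunc (m_ext i) d"

definition Vm :: "cpoly set" where
  "Vm = poly_vs.span (Pm ` {1..N + 1})"

lemma m_ext_less: "1 \<le> i \<Longrightarrow> i < j \<Longrightarrow> j \<le> N + 1 \<Longrightarrow> m_ext i < m_ext j"
  using m_less[of i j] m_less[of i N] m_N_less
  by (cases "j = N + 1"; cases "i = N") (auto simp: m_ext_def)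

lemma m_ext_gap: "1 \<le> i \<Longrightarrow> i \<le> j \<Longrightarrow> j \<le> N + 1 \<Longrightarrow> m_ext i + (j - i) \<le> m_ext j"
proof (induction j)
  case (Suc j)
  then show ?case
    using m_ext_less[of j "Suc j"] by (cases "i = Suc j") (auto simp: Suc_diff_le)
qed simp

lemma m_bounds:
  assumes "1 \<le> k" "k \<le> N"
  shows "k - 1 \<le> m k" "m k + (N + 1 - k) \<le> d"
  using assms m_ext_gap[of 1 k] m_ext_gap[of k "N + 1"] by (auto simp: m_ext_def)

lemma m_ext_le: "1 \<le> i \<Longrightarrow> i \<le> N + 1 \<Longrightarrow> m_ext i \<le> d"
  using m_ext_gap[of i "N + 1"] by (simp add: m_ext_def)

lemma degree_Pm: "1 \<le> i \<Longrightarrow> i \<le> N + 1 \<Longrightarrow> degree (Pm i) = m_ext i"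
  by (simp add: Pm_def degree_Ptrunc m_ext_le)

lemma inj_on_m_ext: "inj_on m_ext {1..N + 1}"
  by (rule strict_mono_on_imp_inj_on) (auto simp: strict_mono_on_def m_ext_less)

lemma inj_on_degree_if_degree_eq_m_ext:
  assumes "J \<subseteq> {1..N + 1}" "\<And>j. j \<in> J \<Longrightarrow> degree (f j) = m_ext j"
  shows "inj_on (\<lambda>j. degree (f j)) J"
proof (rule inj_onI)
  fix i j
  assume "i \<in> J" "j \<in> J" "degree (f i) = degree (f j)"
  then show "i = j"
    using assms inj_onD[OF inj_on_m_ext, of i j] by (metis subsetD)
qed

lemma independent_Pm:
  assumes "J \<subseteq> {1..N + 1}"
  shows "poly_vs.independent (Pm ` J)" "card (Pm ` J) = card J"
proof -
  have "finite J"
    using assms finite_subset by blast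
  moreover have "inj_on (\<lambda>j. degree (Pm j)) J"
    using assms by (intro inj_on_degree_if_degree_eq_m_ext) (auto simp: degree_Pm)
  moreover have "Pm j \<noteq> 0" for j
    by (simp add: Pm_def Ptrunc_nonzero)
  ultimately show "poly_vs.independent (Pm ` J)" "card (Pm ` J) = card J"
    using independent_image_if_inj_on_degree by blast+
qed

lemma Pm_in_Vm: "1 \<le> i \<Longrightarrow> i \<le> N + 1 \<Longrightarrow> Pm i \<in> Vm"
  unfolding Vm_def by (intro poly_vs.span_base) simp

lemma Vm_in_Gr: "in_Gr (N + 1) d Vm"
proof -
  have "Pm ` {1..N + 1} \<subseteq> Poly_le d"
    by (auto simp: Poly_le_def degree_Pm m_ext_le)
  then have "Vm \<subseteq> Poly_le d"
    unfolding Vm_def by (rule poly_vs.span_minimal[OF _ Poly_le_subspace])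
  moreover have "poly_vs.dim Vm = N + 1"
    unfolding Vm_def using independent_Pm[of "{1..N + 1}"]
    by (simp add: poly_vs.dim_eq_card_independent)
  ultimately show ?thesis
    by (simp add: in_Gr_def psubspace_def pdim_def Vm_def)
qed

lemma dim_Vm_Int_osc_flag_0:
  assumes "1 \<le> k" "k \<le> N"
  shows "N + 1 - k \<le> poly_vs.dim (Vm \<inter> osc_flag d 0 (d - 1 - m k))"
proof -
  let ?f = "\<lambda>j. Pm j - Pm k"
  have m_ext_k: "m_ext k = m k"
    using assms by (simp add: m_ext_def)
  have degree_f: "degree (?f j) = m_ext j" if "j \<in> {k + 1..N + 1}" for j
    using that assms m_ext_less[of k j] m_ext_le[of j]
    by (simp add: Pm_def degree_Ptrunc_diff)
  have "card {k + 1..N + 1} \<le> poly_vs.dim (Vm \<inter> osc_flag d 0 (d - 1 - m k))"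
  proof (rule card_le_dim_if_inj_on_degree)
    show "inj_on (\<lambda>j. degree (?f j)) {k + 1..N + 1}"
      using assms by (intro inj_on_degree_if_degree_eq_m_ext) (auto simp: degree_f)
    show "?f j \<noteq> 0" if "j \<in> {k + 1..N + 1}" for j
    proof
      assume "?f j = 0"
      then have "m_ext j = 0"
        using degree_f[OF that] by simp
      then show False
        using m_ext_less[of k j] that assms by simp
    qed
    show "?f ` {k + 1..N + 1} \<subseteq> Vm \<inter> osc_flag d 0 (d - 1 - m k)"
    proof clarify
      fix j assume j: "j \<in> {k + 1..N + 1}"
      have "?f j \<in> Vm"
        using j assms by (intro poly_vs.span_diff[of _ "Pm ` {1..N + 1}", folded Vm_def] Pm_in_Vm) auto
      moreover have "\<forall>t < d - (d - 1 - m k). coeff (?f j) t = 0"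
        using j assms m_ext_less[of k j] m_ext_k m_bounds(2)[OF assms]
        by (auto simp: Pm_def coeff_Ptrunc)
      ultimately show "?f j \<in> Vm \<inter> osc_flag d 0 (d - 1 - m k)"
        using j assms degree_f[OF j] m_ext_le[of j] by (simp add: mem_osc_flag_0_iff Poly_le_def)
    qed
    show "Vm \<inter> osc_flag d 0 (d - 1 - m k) \<subseteq> Poly_le d"
      by (auto simp: osc_flag_def)
  qed simp
  then show ?thesis
    by simp
qed

lemma dim_Vm_Int_Poly_le:
  assumes "1 \<le> k" "k \<le> N"
  shows "k \<le> poly_vs.dim (Vm \<inter> Poly_le (m k))"
proof -
  have "card {1..k} \<le> poly_vs.dim (Vm \<inter> Poly_le (m k))"
  proof (rule card_le_dim_if_inj_on_degree)
    show "inj_on (\<lambda>j. degree (Pm j)) {1..k}"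
      using assms by (intro inj_on_degree_if_degree_eq_m_ext) (auto simp: degree_Pm)
    show "Pm ` {1..k} \<subseteq> Vm \<inter> Poly_le (m k)"
    proof clarify
      fix j assume j: "j \<in> {1..k}"
      then have "m_ext j \<le> m k"
        using assms m_ext_less[of j k] by (cases "j = k") (auto simp: m_ext_def)
      then show "Pm j \<in> Vm \<inter> Poly_le (m k)"
        using j assms by (simp add: Pm_in_Vm Poly_le_def degree_Pm)
    qed
    show "Vm \<inter> Poly_le (m k) \<subseteq> Poly_le d"
      using m_bounds(2)[OF assms] by (auto simp: Poly_le_def)
  qed (simp_all add: Pm_def Ptrunc_nonzero)
  then show ?thesis
    by simp
qed

lemma one_plus_X_power_in_Vm: "[:1, 1:] ^ d \<in> Vm"
  using Pm_in_Vm[of "N + 1"] by (simp add: Pm_def m_ext_def Ptrunc_self)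

lemma Vm_eq_pspan: "Vm = pspan (insert (Ptrunc d d) ((\<lambda>i. Ptrunc (m i) d) ` {1..N}))"
proof -
  have "{1..N + 1} = insert (N + 1) {1..N}"
    by auto
  then have "Pm ` {1..N + 1} = insert (Ptrunc d d) ((\<lambda>i. Ptrunc (m i) d) ` {1..N})"
    by (auto simp: Pm_def m_ext_def)
  then show ?thesis
    by (simp add: Vm_def pspan_def)
qed

lemma schubert_zero_iff:
  "schubert_var N d (\<lambda>l. m (N + 1 - l) - (N - l)) (osc_flag d 0) V \<longleftrightarrow>
    in_Gr (N + 1) d V \<and> (\<forall>k\<in>{1..N}. N + 1 - k \<le> poly_vs.dim (V \<inter> osc_flag d 0 (d - 1 - m k)))"
proof -
  have reflect: "(\<forall>i\<in>{1..N}. P i) \<longleftrightarrow> (\<forall>k\<in>{1..N}. P (N + 1 - k))" for P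
  proof -
    have "N + 1 - i \<in> {1..N}" "N + 1 - (N + 1 - i) = i" if "i \<in> {1..N}" for i
      using that by auto
    then show ?thesis
      by metis
  qed
  have index: "d + (N + 1 - k) - (N + 1 + (m (N + 1 - (N + 1 - k)) - (N - (N + 1 - k)))) = d - 1 - m k"
    if "k \<in> {1..N}" for k
    using that m_bounds[of k] by auto
  have "(\<forall>i\<in>{1..N}. i \<le> pdim (V \<inter> osc_flag d 0 (d + i - (N + 1 + (m (N + 1 - i) - (N - i)))))) \<longleftrightarrow>
      (\<forall>k\<in>{1..N}. N + 1 - k \<le> poly_vs.dim (V \<inter> osc_flag d 0 (d - 1 - m k)))"
    by (subst reflect) (simp only: index pdim_def cong: ball_cong)
  then show ?thesis
    unfolding schubert_var_iff[OF osc_flag_top] by simp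
qed

lemma schubert_minus_one_iff:
  "schubert_var N d (special_part (d - N)) (osc_flag d (-1)) V \<longleftrightarrow>
    in_Gr (N + 1) d V \<and> [:1, 1:] ^ d \<in> V"
proof -
  have "N \<le> d"
    using m_bounds[of N] N_pos by simp
  have "{1..N} = insert 1 {2..N}"
    using N_pos by auto
  moreover have "1 \<le> pdim (V \<inter> osc_flag d (-1) (d + 1 - (N + 1 + special_part (d - N) 1)))
      \<longleftrightarrow> [:1, 1:] ^ d \<in> V" if "in_Gr (N + 1) d V"
    using dim_osc_flag_0_pos_iff[of V d "-1"] that \<open>N \<le> d\<close>
    by (simp add: special_part_def in_Gr_def psubspace_def pdim_def Suc_le_eq)
  moreover have "i \<le> pdim (V \<inter> osc_flag d (-1) (d + i - (N + 1 + special_part (d - N) i)))"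
    if "in_Gr (N + 1) d V" "i \<in> {2..N}" for i
    using dim_Int_osc_flag_ge[OF that(1)] that(2) by (simp add: special_part_def pdim_def)
  ultimately show ?thesis
    unfolding schubert_var_iff[OF osc_flag_top] by auto
qed

lemma schubert_infinity_iff:
  "schubert_var N d (\<lambda>l. d - m l - (N + 1 - l)) (inf_flag d) V \<longleftrightarrow>
    in_Gr (N + 1) d V \<and> (\<forall>k\<in>{1..N}. k \<le> poly_vs.dim (V \<inter> Poly_le (m k)))"
proof -
  have index: "d + k - (N + 1 + (d - m k - (N + 1 - k))) = m k" if "k \<in> {1..N}" for k
    using that m_bounds[of k] by auto
  show ?thesis
    unfolding schubert_var_iff[OF inf_flag_top] inf_flag_def pdim_def
    by (simp only: index cong: ball_cong conj_cong)
qed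

lemma eq_Vm_if_schubert_conditions:
  assumes V: "in_Gr (N + 1) d V" "[:1, 1:] ^ d \<in> V"
    and zero: "\<forall>k\<in>{1..N}. N + 1 - k \<le> poly_vs.dim (V \<inter> osc_flag d 0 (d - 1 - m k))"
    and infinity: "\<forall>k\<in>{1..N}. k \<le> poly_vs.dim (V \<inter> Poly_le (m k))"
  shows "V = Vm"
proof -
  have V_sub: "poly_vs.subspace V" "V \<subseteq> Poly_le d" "poly_vs.dim V = N + 1"
    using V(1) by (auto simp: in_Gr_def psubspace_def pdim_def)
  obtain W where W: "finite W" "Poly_le d \<subseteq> poly_vs.span W"
    using Poly_le_finite_span by metis
  have "Pm k \<in> V" if "k \<in> {1..N + 1}" for k
  proof (cases "k = N + 1")
    case True
    then show ?thesis
      using V(2) by (simp add: Pm_def m_ext_def Ptrunc_self)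
  next
    case False
    then have k: "1 \<le> k" "k \<le> N"
      using that by auto
    then have "k \<le> poly_vs.dim (V \<inter> Poly_le (m k))"
        "N + 1 - k \<le> poly_vs.dim (V \<inter> osc_flag d 0 (d - 1 - m k))"
      using zero infinity by auto
    then have "poly_vs.dim V \<le> poly_vs.dim (V \<inter> Poly_le (m k))
        + poly_vs.dim (V \<inter> osc_flag d 0 (d - 1 - m k))"
      using V_sub(3) k by linarith
    then have "Ptrunc (m k) d \<in> V"
      using V_sub V(2) m_bounds(2)[OF k] k by (intro Ptrunc_mem_if_dim_le) auto
    then show ?thesis
      using k by (simp add: Pm_def m_ext_def)
  qed
  then have basis: "Pm ` {1..N + 1} \<subseteq> V"
    by blast
  then have "Vm \<subseteq> V"
    unfolding Vm_def by (rule poly_vs.span_minimal[OF _ V_sub(1)])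
  moreover have "V \<subseteq> Vm"
    unfolding Vm_def
  proof (rule poly_vs.subset_span_if_dim_le_card[OF _ basis _ W(1)])
    show "poly_vs.independent (Pm ` {1..N + 1})"
      by (rule independent_Pm) simp
    show "V \<subseteq> poly_vs.span W"
      using V_sub(2) W(2) by (rule order_trans)
    show "poly_vs.dim V \<le> card (Pm ` {1..N + 1})"
      using V_sub(3) independent_Pm(2)[of "{1..N + 1}"] by simp
  qed
  ultimately show ?thesis
    by blast
qed

theorem schubert_intersection_eq_Vm:
  "{V. schubert_var N d (\<lambda>l. m (N + 1 - l) - (N - l)) (osc_flag d 0) V
      \<and> schubert_var N d (special_part (d - N)) (osc_flag d (-1)) V
      \<and> schubert_var N d (\<lambda>l. d - m l - (N + 1 - l)) (inf_flag d) V} = {Vm}"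
proof -
  have "schubert_var N d (\<lambda>l. m (N + 1 - l) - (N - l)) (osc_flag d 0) Vm"
    "schubert_var N d (special_part (d - N)) (osc_flag d (-1)) Vm"
    "schubert_var N d (\<lambda>l. d - m l - (N + 1 - l)) (inf_flag d) Vm"
    unfolding schubert_zero_iff schubert_minus_one_iff schubert_infinity_iff
    using Vm_in_Gr one_plus_X_power_in_Vm dim_Vm_Int_osc_flag_0 dim_Vm_Int_Poly_le by auto
  moreover have "V = Vm"
    if "schubert_var N d (\<lambda>l. m (N + 1 - l) - (N - l)) (osc_flag d 0) V"
      "schubert_var N d (special_part (d - N)) (osc_flag d (-1)) V"
      "schubert_var N d (\<lambda>l. d - m l - (N + 1 - l)) (inf_flag d) V" for V
    using that unfolding schubert_zero_iff schubert_minus_one_iff schubert_infinity_iff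
    by (intro eq_Vm_if_schubert_conditions) simp_all
  ultimately show ?thesis
    by blast
qed

end

theorem theorem4:
  fixes N d :: nat and m :: "nat \<Rightarrow> nat"
  assumes "N \<ge> 1"
    and "\<And>i j. 1 \<le> i \<Longrightarrow> i < j \<Longrightarrow> j \<le> N \<Longrightarrow> m i < m j"
    and "m N < d"
  shows "{V. schubert_var N d (\<lambda>l. m (N + 1 - l) - (N - l)) (osc_flag d 0) V
            \<and> schubert_var N d (special_part (d - N)) (osc_flag d (-1)) V
            \<and> schubert_var N d (\<lambda>l. d - m l - (N + 1 - l)) (inf_flag d) V}
         = {pspan (insert (Ptrunc d d) ((\<lambda>i. Ptrunc (m i) d) ` {1..N}))}"
proof -
  interpret truncation_degrees N d m
    using assms by unfold_locales
  show ?thesis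
    using schubert_intersection_eq_Vm by (simp add: Vm_eq_pspan)
qed

end
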